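(* For $q=p^h$ with $p$ prime and $h\geq1$, $$d\big(C(PG(2,q))^\perp\big)\leq 2q+1-\frac{q-1}{p-1}.$$
   Context: $C(PG(2,q))$ is the $\mathbb{F}_p$-span of the incidence vectors of the lines of $PG(2,q)$, with coordinates indexed by points. $C^\perp$ is its dual with respect to the standard scalar product over $\mathbb{F}_p$. $d(\cdot)$ is the minimum nonzero weight. *)

theory Defs
  imports Complex_Main "HOL-Computational_Algebra.Primes"
begin

type_synonym 'k vec3 = "'k \<times> 'k \<times> 'k"

definition smul3 :: "'k::field \<Rightarrow> 'k vec3 \<Rightarrow> 'k vec3" where
  "smul3 t v = (case v of (a, b, c) \<Rightarrow> (t * a, t * b, t * c))"

definition dot3 :: "'k::field vec3 \<Rightarrow> 'k vec3 \<Rightarrow> 'k" where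
  "dot3 v u = (case v of (a, b, c) \<Rightarrow> case u of (x, y, z) \<Rightarrow> a * x + b * y + c * z)"

definition pg_pt :: "'k::field vec3 \<Rightarrow> 'k vec3 set" where
  "pg_pt v = {smul3 t v | t. t \<noteq> 0}"

definition pg_points :: "'k::field vec3 set set" where
  "pg_points = pg_pt ` (UNIV - {(0, 0, 0)})"

definition pg_line :: "'k::field vec3 \<Rightarrow> 'k vec3 set set" where
  "pg_line u = {pg_pt v | v. v \<noteq> (0, 0, 0) \<and> dot3 v u = 0}"

definition pg_lines :: "'k::field vec3 set set set" where
  "pg_lines = pg_line ` (UNIV - {(0, 0, 0)})"

text \<open>Vectors over F_p indexed by the points, F_p represented by {0..<p}.\<close>
definition words :: "nat \<Rightarrow> ('k::field vec3 set \<Rightarrow> int) set" where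
  "words p = {c. (\<forall>x. 0 \<le> c x \<and> c x < int p) \<and> (\<forall>x. x \<notin> (pg_points :: 'k vec3 set set) \<longrightarrow> c x = 0)}"

definition incid :: "'k::field vec3 set set \<Rightarrow> 'k vec3 set \<Rightarrow> int" where
  "incid L x = (if x \<in> L then 1 else 0)"

definition code_PG :: "nat \<Rightarrow> ('k::field vec3 set \<Rightarrow> int) set" where
  "code_PG p = {c \<in> words p. \<exists>a :: 'k vec3 set set \<Rightarrow> int.
      \<forall>x\<in>pg_points. c x = (\<Sum>L\<in>pg_lines. a L * incid L x) mod int p}"

definition dual_code :: "nat \<Rightarrow> ('k::field vec3 set \<Rightarrow> int) set \<Rightarrow> ('k vec3 set \<Rightarrow> int) set" where
  "dual_code p C = {c \<in> words p. \<forall>d\<in>C. (\<Sum>x\<in>pg_points. c x * d x) mod int p = 0}"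

definition weight :: "('k::field vec3 set \<Rightarrow> int) \<Rightarrow> nat" where
  "weight c = card {x \<in> (pg_points :: 'k vec3 set set). c x \<noteq> 0}"

definition min_dist :: "('k::field vec3 set \<Rightarrow> int) set \<Rightarrow> nat" where
  "min_dist C = Min (weight ` (C - {\<lambda>_. 0}))"

end

theory Submission
  imports Defs "HOL-Number_Theory.Residues" "HOL-Computational_Algebra.Polynomial"
begin

(* We exhibit an explicit nonzero word of the dual code of weight exactly
   2q + 1 - (q - 1)/(p - 1).  Its support is the graph of the Frobenius map,
   i.e. the q affine points (x, x^p, 1), carrying the value 1, together with the
   points at infinity NOT determined by that graph, carrying the value -1 = p - 1.

   For every m the map psi_m(x) = x^p - m x is additive, so
      its fibres are cosets of its kernel K_m; K_m has at most p elements and its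
      order divides q, hence K_m is {0} or has exactly p elements.  The slopes m with
      K_m nonzero are the directions determined by the graph; there are exactly
      (q - 1)/(p - 1) of them, and their number is 1 mod p.
   2. Every line meets the graph and the undetermined directions in numbers of
      points that agree mod p; this is a fibre count for psi_m.
   3. A word whose sum along every line vanishes mod p lies in the dual code, and
      the minimum distance is at most the weight of any nonzero codeword. *)


section \<open>Points and lines of the projective plane\<close>

lemma pg_pt_self: "v \<in> pg_pt v"
  unfolding pg_pt_def by (rule CollectI, rule exI[of _ 1]) (cases v, simp add: smul3_def)

lemma pg_pt_eqD: "pg_pt v = pg_pt w \<Longrightarrow> \<exists>t. t \<noteq> 0 \<and> v = smul3 t w"
  using pg_pt_self[of v] unfolding pg_pt_def by auto

lemma dot3_smul3: "dot3 (smul3 t w) u = t * dot3 w u"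
  by (cases w; cases u) (simp add: smul3_def dot3_def algebra_simps)

lemma pg_pt_in_line:
  assumes "v \<noteq> (0, 0, 0)"
  shows "pg_pt v \<in> pg_line u \<longleftrightarrow> dot3 v u = 0"
proof
  assume "pg_pt v \<in> pg_line u"
  then obtain w where w: "pg_pt v = pg_pt w" "dot3 w u = 0" unfolding pg_line_def by auto
  then obtain t where "v = smul3 t w" using pg_pt_eqD by blast
  thus "dot3 v u = 0" using w by (simp add: dot3_smul3)
next
  assume "dot3 v u = 0"
  thus "pg_pt v \<in> pg_line u" using assms unfolding pg_line_def by blast
qed

lemma pg_pt_in_points: "v \<noteq> (0, 0, 0) \<Longrightarrow> pg_pt v \<in> pg_points"
  unfolding pg_points_def by auto

definition dir_pt :: "'k::field \<Rightarrow> 'k vec3 set" where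
  "dir_pt m = pg_pt (1, m, 0)"

definition vert_pt :: "'k::field vec3 set" where
  "vert_pt = pg_pt (0, 1, 0)"

lemma inj_dir_pt: "inj dir_pt"
  by (rule injI) (auto simp: dir_pt_def smul3_def dest: pg_pt_eqD)

lemma card_dir_pt_image: "card (dir_pt ` S) = card S"
  using card_image[OF inj_on_subset[OF inj_dir_pt subset_UNIV]] .

lemma vert_pt_not_dir_pt: "vert_pt \<notin> dir_pt ` S"
  by (auto simp: vert_pt_def dir_pt_def smul3_def dest: pg_pt_eqD)


section \<open>Words orthogonal to all lines\<close>

lemma sum_two_valued:
  fixes a b :: int
  assumes "finite S" "A \<subseteq> S" "B \<subseteq> S" "A \<inter> B = {}"
  shows "(\<Sum>x\<in>S. if x \<in> A then a else if x \<in> B then b else 0) = int (card A) * a + int (card B) * b"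
proof -
  have "(\<Sum>x\<in>S. if x \<in> A then a else if x \<in> B then b else 0)
      = (\<Sum>x\<in>S. if x \<in> A then a else 0) + (\<Sum>x\<in>S. if x \<in> B then b else 0)"
    using assms(4) by (subst sum.distrib[symmetric]) (intro sum.cong, auto)
  also have "\<dots> = int (card A) * a + int (card B) * b"
    using assms(1-3) by (simp add: sum.If_cases Int_absorb1 Int_absorb2)
  finally show ?thesis .
qed

text \<open>Since \<open>C(PG(2,q))\<close> is spanned by the lines, a word is in its dual as soon as
  its sum along every line vanishes mod \<open>p\<close>.\<close>
lemma dual_code_of_line_sums:
  fixes c :: "'k::field vec3 set \<Rightarrow> int"
  assumes c: "c \<in> words p"
    and lines: "\<And>L. L \<in> pg_lines \<Longrightarrow> int p dvd (\<Sum>x\<in>pg_points. c x * incid L x)"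
  shows "c \<in> dual_code p (code_PG p)"
  unfolding dual_code_def
proof (intro CollectI conjI ballI c)
  fix d assume "d \<in> (code_PG p :: ('k vec3 set \<Rightarrow> int) set)"
  then obtain a :: "'k vec3 set set \<Rightarrow> int" where
    a: "\<forall>x\<in>pg_points. d x = (\<Sum>L\<in>pg_lines. a L * incid L x) mod int p"
    unfolding code_PG_def by blast
  have "(\<Sum>x\<in>pg_points. c x * d x) mod int p = (\<Sum>x\<in>pg_points. (c x * d x) mod int p) mod int p"
    by (rule mod_sum_eq[symmetric])
  also have "\<dots> = (\<Sum>x\<in>pg_points. (c x * (\<Sum>L\<in>pg_lines. a L * incid L x)) mod int p) mod int p"
  proof (rule arg_cong[where f="\<lambda>z. z mod int p"], rule sum.cong[OF refl])
    fix x assume "x \<in> (pg_points :: 'k vec3 set set)"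
    hence "d x = (\<Sum>L\<in>pg_lines. a L * incid L x) mod int p" using a by blast
    thus "(c x * d x) mod int p = (c x * (\<Sum>L\<in>pg_lines. a L * incid L x)) mod int p"
      by (simp only: mod_mult_right_eq)
  qed
  also have "\<dots> = (\<Sum>x\<in>pg_points. c x * (\<Sum>L\<in>pg_lines. a L * incid L x)) mod int p"
    by (rule mod_sum_eq)
  also have "(\<Sum>x\<in>pg_points. c x * (\<Sum>L\<in>pg_lines. a L * incid L x))
      = (\<Sum>L\<in>pg_lines. a L * (\<Sum>x\<in>pg_points. c x * incid L x))"
    by (simp add: sum_distrib_left sum.swap[of _ pg_lines] algebra_simps)
  also have "\<dots> mod int p = 0"
    by (intro dvd_imp_mod_0 dvd_sum dvd_mult lines)
  finally show "(\<Sum>x\<in>pg_points. c x * d x) mod int p = 0" .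
qed

text \<open>Over a finite field all weights are bounded, so the minimum is attained below
  the weight of any nonzero codeword.\<close>
lemma min_dist_le_weight:
  fixes C :: "('k::{field,finite} vec3 set \<Rightarrow> int) set"
  assumes "c \<in> C" "c \<noteq> (\<lambda>_. 0)"
  shows "min_dist C \<le> weight c"
proof -
  have "weight ` (C - {\<lambda>_. 0}) \<subseteq> {..card (pg_points :: 'k vec3 set set)}"
    unfolding weight_def by (auto intro: card_mono)
  hence "finite (weight ` (C - {\<lambda>_. 0}))"
    by (rule finite_subset) simp
  thus ?thesis
    unfolding min_dist_def using assms by (intro Min_le) auto
qed


section \<open>The additive maps \<open>x \<mapsto> x^p - m x\<close> on a field of order \<open>p^h\<close>\<close>

context
  fixes p h :: nat
  assumes p_prime: "prime p"
    and card_field: "card (UNIV :: 'k::{field,finite} set) = p ^ h"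
begin

lemma CHAR_eq_p: "CHAR('k) = p"
proof -
  have char_prime: "prime CHAR('k)"
    by (rule prime_CHAR_semidom, rule finite_imp_CHAR_pos) simp
  have "CHAR('k) dvd p ^ h" using CHAR_dvd_CARD[where ?'a='k] card_field by simp
  hence "CHAR('k) dvd p" using char_prime prime_dvd_power by blast
  thus ?thesis using char_prime p_prime primes_dvd_imp_eq by blast
qed

lemma p_dvd_card_field: "p dvd card (UNIV :: 'k set)"
  using CHAR_dvd_CARD[where ?'a='k] by (simp add: CHAR_eq_p)

lemma card_field_ge_1: "card (UNIV :: 'k set) \<ge> 1"
  by (simp add: Suc_leI card_gt_0_iff)

lemma p_ge_2: "p \<ge> 2"
  using p_prime prime_ge_2_nat by blast

lemma frobenius_add: "((x::'k) + y) ^ p = x ^ p + y ^ p"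
  by (rule freshmans_dream) (use CHAR_eq_p p_prime in auto)

lemma frobenius_diff: "((x::'k) - y) ^ p = x ^ p - y ^ p"
  using frobenius_add[of x "-y"] minus_power_prime_CHAR[of p y] CHAR_eq_p p_prime by simp

definition psi :: "'k \<Rightarrow> 'k \<Rightarrow> 'k" where
  "psi m x = x ^ p - m * x"

definition ker_psi :: "'k \<Rightarrow> 'k set" where
  "ker_psi m = {x. psi m x = 0}"

lemma psi_add: "psi m (x + y) = psi m x + psi m y"
  by (simp add: psi_def frobenius_add algebra_simps)

lemma psi_diff: "psi m (x - y) = psi m x - psi m y"
  by (simp add: psi_def frobenius_diff algebra_simps)

lemma zero_in_ker_psi: "0 \<in> ker_psi m"
  using p_prime by (simp add: ker_psi_def psi_def prime_gt_0_nat)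

lemma fibre_psi:
  assumes "psi m x0 = b"
  shows "{x. psi m x = b} = (\<lambda>k. x0 + k) ` ker_psi m"
proof (intro equalityI subsetI)
  fix x assume "x \<in> {x. psi m x = b}"
  hence "x - x0 \<in> ker_psi m" using assms by (simp add: ker_psi_def psi_diff)
  thus "x \<in> (\<lambda>k. x0 + k) ` ker_psi m" by (intro image_eqI[of _ _ "x - x0"]) auto
qed (use assms in \<open>auto simp: ker_psi_def psi_add\<close>)

lemma card_fibre_psi:
  "card {x. psi m x = b} = (if b \<in> range (psi m) then card (ker_psi m) else 0)"
proof (cases "b \<in> range (psi m)")
  case True
  then obtain x0 where "psi m x0 = b" by auto
  thus ?thesis using True by (simp add: fibre_psi card_image inj_on_def)
qed auto

lemma card_ker_psi_dvd: "card (ker_psi m) dvd card (UNIV :: 'k set)"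
proof -
  have "card (UNIV :: 'k set) = (\<Sum>b\<in>range (psi m). card {x. psi m x = b})"
    using sum.group[of UNIV "range (psi m)" "psi m" "\<lambda>_. 1::nat"] by simp
  also have "\<dots> = card (range (psi m)) * card (ker_psi m)"
    by (simp add: card_fibre_psi)
  finally show ?thesis by simp
qed

text \<open>\<open>ker_psi m\<close> is the root set of a nonzero polynomial of degree \<open>p\<close>.\<close>
lemma card_ker_psi_le: "card (ker_psi m) \<le> p"
proof -
  define P where "P = monom (1::'k) p - [:0, m:]"
  have "ker_psi m = {x. poly P x = 0}"
    by (auto simp: ker_psi_def psi_def P_def poly_monom algebra_simps)
  moreover have "coeff P p = 1"
    using p_ge_2 by (simp add: P_def coeff_pCons split: nat.splits)
  hence "P \<noteq> 0" by auto
  moreover have "degree P \<le> p"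
    unfolding P_def using p_ge_2
    by (intro degree_diff_le degree_monom_le) (auto simp: degree_pCons_eq_if)
  ultimately show ?thesis using card_poly_roots_bound[of P] by simp
qed

text \<open>A nontrivial kernel is a subgroup of order a power of \<open>p\<close> and at most \<open>p\<close>,
  hence has exactly \<open>p\<close> elements.\<close>
lemma card_ker_psi_nontrivial:
  assumes "ker_psi m \<noteq> {0}"
  shows "card (ker_psi m) = p"
proof -
  obtain i where i: "card (ker_psi m) = p ^ i"
    using card_ker_psi_dvd[of m] card_field divides_primepow_nat[OF p_prime] by auto
  obtain x where "x \<in> ker_psi m" "x \<noteq> 0" using assms zero_in_ker_psi by blast
  hence "card {0, x} \<le> card (ker_psi m)" using zero_in_ker_psi by (intro card_mono) auto
  hence "p ^ i \<ge> 2" using i \<open>x \<noteq> 0\<close> by simp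
  moreover have "i \<le> 1"
    using power_le_imp_le_exp[of p i 1] card_ker_psi_le[of m] i p_ge_2 by simp
  ultimately have "i = 1" by (cases i) auto
  thus ?thesis using i by simp
qed

lemma card_fibre_psi_trivial:
  assumes "ker_psi m = {0}"
  shows "card {x. psi m x = b} = 1"
proof -
  have "inj (psi m)"
  proof (rule injI)
    fix x y assume "psi m x = psi m y"
    hence "x - y \<in> ker_psi m" by (simp add: ker_psi_def psi_diff)
    thus "x = y" using assms by simp
  qed
  hence "b \<in> range (psi m)" using finite_UNIV_inj_surj[of "psi m"] by auto
  thus ?thesis using assms by (simp add: card_fibre_psi)
qed


section \<open>Directions determined by the graph of the Frobenius map\<close>

text \<open>The slope \<open>(y^p - x^p)/(y - x)\<close> of two graph points equals \<open>m\<close> exactly when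
  \<open>y - x\<close> is a nonzero element of \<open>ker_psi m\<close>.\<close>
definition det_dirs :: "'k set" where
  "det_dirs = {m. ker_psi m \<noteq> {0}}"

text \<open>Every nonzero \<open>x\<close> lies in exactly one kernel, that of \<open>m = x^p / x\<close>, and each
  nontrivial kernel has \<open>p - 1\<close> nonzero elements.\<close>
lemma card_det_dirs: "card det_dirs * (p - 1) = card (UNIV :: 'k set) - 1"
proof -
  define slope where "slope x = x ^ p / x" for x :: 'k
  have ker_nonzero: "{x \<in> UNIV - {0}. slope x = m} = ker_psi m - {0}" for m
    by (auto simp: slope_def ker_psi_def psi_def divide_eq_eq)
  have "slope ` (UNIV - {0}) \<subseteq> det_dirs"
    using ker_nonzero zero_in_ker_psi by (fastforce simp: det_dirs_def)
  hence "card (UNIV - {0::'k}) = (\<Sum>m\<in>det_dirs. card {x \<in> UNIV - {0}. slope x = m})"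
    using sum.group[of "UNIV - {0::'k}" det_dirs slope "\<lambda>_. 1::nat"] by simp
  also have "\<dots> = (\<Sum>m\<in>det_dirs. card (ker_psi m - {0}))"
    by (simp only: ker_nonzero)
  also have "\<dots> = (\<Sum>m\<in>det_dirs. p - 1)"
    by (intro sum.cong refl) (simp add: det_dirs_def card_ker_psi_nontrivial zero_in_ker_psi)
  finally show ?thesis by simp
qed

lemma card_det_dirs_mod_p: "int p dvd int (card det_dirs) - 1"
proof -
  have "int (card det_dirs) * (int p - 1) = int (card (UNIV :: 'k set)) - 1"
    using card_det_dirs card_field_ge_1 p_ge_2
    by (metis of_nat_1 of_nat_diff of_nat_mult le_trans one_le_numeral)
  hence "int (card det_dirs) - 1 = int p * int (card det_dirs) - int (card (UNIV :: 'k set))"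
    by (simp add: algebra_simps)
  thus ?thesis using p_dvd_card_field by simp
qed

lemma card_fibre_psi_mod_p:
  "int p dvd int (card {x. psi m x = b}) - (if m \<in> det_dirs then 0 else 1)"
proof (cases "m \<in> det_dirs")
  case True
  thus ?thesis
    using card_ker_psi_nontrivial[of m] by (simp add: det_dirs_def card_fibre_psi)
next
  case False
  thus ?thesis using card_fibre_psi_trivial[of m b] by (simp add: det_dirs_def)
qed

text \<open>The arithmetic heart of the argument: for the line \<open>u1 X + u2 Y + u3 Z = 0\<close>,
  its number of points on the graph is congruent mod \<open>p\<close> to its number of
  points among the undetermined directions and the vertical direction.\<close>
lemma line_count_mod_p:
  assumes u: "(u1, u2, u3) \<noteq> ((0::'k), 0, 0)"
  shows "int p dvd int (card {x::'k. x * u1 + x ^ p * u2 + u3 = 0})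
     - int ((if u2 = 0 then 1 else 0) + card {m. m \<notin> det_dirs \<and> u1 + m * u2 = 0})"
proof -
  consider (affine) "u2 = 0" "u1 \<noteq> 0" | (infinity) "u2 = 0" "u1 = 0" | (slope) "u2 \<noteq> 0"
    by blast
  then show ?thesis
  proof cases
    case affine
    hence "{x::'k. x * u1 + x ^ p * u2 + u3 = 0} = {- u3 / u1}"
      by (auto simp: field_simps eq_neg_iff_add_eq_0)
    thus ?thesis using affine by simp
  next
    case infinity
    hence "{x::'k. x * u1 + x ^ p * u2 + u3 = 0} = {}" using u by auto
    moreover have "card {m. m \<notin> det_dirs \<and> u1 + m * u2 = 0}
        = card (UNIV :: 'k set) - card det_dirs"
      using infinity by (simp add: Collect_neg_eq Compl_eq_Diff_UNIV card_Diff_subset)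
    moreover have "card det_dirs \<le> card (UNIV :: 'k set)" by (simp add: card_mono)
    ultimately have "int (card {x::'k. x * u1 + x ^ p * u2 + u3 = 0})
        - int ((if u2 = 0 then 1 else 0) + card {m. m \<notin> det_dirs \<and> u1 + m * u2 = 0})
      = (int (card det_dirs) - 1) - int (card (UNIV :: 'k set))"
      using infinity by (simp add: of_nat_diff)
    moreover have "int p dvd int (card (UNIV :: 'k set))" using p_dvd_card_field by simp
    ultimately show ?thesis using card_det_dirs_mod_p by simp
  next
    case slope
    define m where "m = - u1 / u2"
    have "x * u1 + x ^ p * u2 + u3 = (psi m x - (- u3 / u2)) * u2" for x
    proof -
      have "(psi m x - (- u3 / u2)) * u2 = x ^ p * u2 - (m * u2) * x + (u3 / u2) * u2"
        by (simp add: psi_def algebra_simps)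
      thus ?thesis using slope by (simp add: m_def algebra_simps)
    qed
    hence fibre: "{x::'k. x * u1 + x ^ p * u2 + u3 = 0} = {x. psi m x = - u3 / u2}"
      using slope by (auto simp: eq_neg_iff_add_eq_0)
    have "u1 + m' * u2 = (m' - m) * u2" for m'
      using slope by (simp add: m_def algebra_simps)
    hence dirs: "{m'. m' \<notin> det_dirs \<and> u1 + m' * u2 = 0} = (if m \<in> det_dirs then {} else {m})"
      using slope by auto
    show ?thesis unfolding fibre dirs
      using slope card_fibre_psi_mod_p[of m "- u3 / u2"] by (cases "m \<in> det_dirs") auto
  qed
qed


section \<open>The codeword\<close>

definition graph_pt :: "'k \<Rightarrow> 'k vec3 set" where
  "graph_pt x = pg_pt (x, x ^ p, 1)"

definition graph_pts :: "'k vec3 set set" where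
  "graph_pts = range graph_pt"

text \<open>The points at infinity not determined by the graph (the vertical direction is
  never determined by the graph of a function).\<close>
definition undet_pts :: "'k vec3 set set" where
  "undet_pts = insert vert_pt (dir_pt ` (- det_dirs))"

text \<open>The word: \<open>1\<close> on the graph, \<open>-1\<close> (represented by \<open>p - 1\<close>) on the undetermined
  directions, \<open>0\<close> elsewhere.\<close>
definition graph_word :: "'k vec3 set \<Rightarrow> int" where
  "graph_word P = (if P \<in> graph_pts then 1 else if P \<in> undet_pts then int p - 1 else 0)"

lemma inj_graph_pt: "inj graph_pt"
  by (rule injI) (auto simp: graph_pt_def smul3_def dest: pg_pt_eqD)

lemma graph_pts_undet_pts_disjoint: "graph_pts \<inter> undet_pts = {}"
  by (auto simp: graph_pts_def undet_pts_def graph_pt_def dir_pt_def vert_pt_def smul3_def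
      dest: pg_pt_eqD)

lemma graph_pts_subset: "graph_pts \<subseteq> pg_points"
  by (auto simp: graph_pts_def graph_pt_def intro: pg_pt_in_points)

lemma undet_pts_subset: "undet_pts \<subseteq> pg_points"
  by (auto simp: undet_pts_def dir_pt_def vert_pt_def intro: pg_pt_in_points)

lemma card_graph_pts: "card graph_pts = card (UNIV :: 'k set)"
  unfolding graph_pts_def using inj_graph_pt by (simp add: card_image)

lemma card_undet_pts: "card undet_pts = 1 + (card (UNIV :: 'k set) - card det_dirs)"
  by (simp add: undet_pts_def vert_pt_not_dir_pt card_dir_pt_image
      Compl_eq_Diff_UNIV card_Diff_subset)

lemma card_graph_pts_on_line:
  "card (graph_pts \<inter> pg_line (u1, u2, u3)) = card {x. x * u1 + x ^ p * u2 + u3 = 0}"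
proof -
  have "graph_pts \<inter> pg_line (u1, u2, u3) = graph_pt ` {x. x * u1 + x ^ p * u2 + u3 = 0}"
    by (auto simp: graph_pts_def graph_pt_def pg_pt_in_line dot3_def)
  thus ?thesis using inj_graph_pt by (simp add: card_image inj_on_subset)
qed

lemma card_undet_pts_on_line:
  "card (undet_pts \<inter> pg_line (u1, u2, u3))
     = (if u2 = 0 then 1 else 0) + card {m. m \<notin> det_dirs \<and> u1 + m * u2 = 0}"
proof -
  have "undet_pts \<inter> pg_line (u1, u2, u3)
      = (if u2 = 0 then {vert_pt} else {}) \<union> dir_pt ` {m. m \<notin> det_dirs \<and> u1 + m * u2 = 0}"
    by (auto simp: undet_pts_def dir_pt_def vert_pt_def pg_pt_in_line dot3_def)
  thus ?thesis by (simp add: vert_pt_not_dir_pt card_dir_pt_image)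
qed

text \<open>Along a line the word sums to \<open>|A \<inter> L| - |B \<inter> L| (mod p)\<close>, which vanishes by
  the congruence of the line counts.\<close>
lemma graph_word_line_sum:
  assumes "L \<in> pg_lines"
  shows "int p dvd (\<Sum>x\<in>pg_points. graph_word x * incid L x)"
proof -
  obtain u1 u2 u3 where u: "(u1, u2, u3) \<noteq> (0, 0, 0)" and L: "L = pg_line (u1, u2, u3)"
    using assms by (auto simp: pg_lines_def)
  let ?A = "graph_pts \<inter> L" and ?B = "undet_pts \<inter> L"
  have "(\<Sum>x\<in>pg_points. graph_word x * incid L x)
      = (\<Sum>x\<in>pg_points. if x \<in> ?A then 1 else if x \<in> ?B then int p - 1 else 0)"
    using graph_pts_undet_pts_disjoint
    by (intro sum.cong) (auto simp: graph_word_def incid_def)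
  also have "\<dots> = int (card ?A) * 1 + int (card ?B) * (int p - 1)"
    using graph_pts_subset undet_pts_subset graph_pts_undet_pts_disjoint
    by (intro sum_two_valued) auto
  also have "\<dots> = (int (card ?A) - int (card ?B)) + int p * int (card ?B)"
    by (simp add: algebra_simps)
  finally show ?thesis
    using line_count_mod_p[OF u]
    by (simp add: L card_graph_pts_on_line card_undet_pts_on_line)
qed

lemma graph_word_in_dual_code: "graph_word \<in> dual_code p (code_PG p)"
proof (rule dual_code_of_line_sums)
  show "graph_word \<in> words p"
    using graph_pts_subset undet_pts_subset p_ge_2 by (auto simp: words_def graph_word_def)
qed (rule graph_word_line_sum)

lemma graph_word_nonzero: "graph_word \<noteq> (\<lambda>_. 0)"
proof
  assume "graph_word = (\<lambda>_. 0)"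
  hence "graph_word (graph_pt 0) = 0" by simp
  thus False by (simp add: graph_word_def graph_pts_def)
qed

lemma weight_graph_word:
  "weight graph_word = 2 * card (UNIV :: 'k set) + 1 - card det_dirs"
proof -
  have "{x \<in> pg_points. graph_word x \<noteq> 0} = graph_pts \<union> undet_pts"
    using graph_pts_subset undet_pts_subset p_ge_2 by (auto simp: graph_word_def)
  hence "weight graph_word = card graph_pts + card undet_pts"
    using graph_pts_undet_pts_disjoint by (simp add: weight_def card_Un_disjoint)
  moreover have "card det_dirs \<le> card (UNIV :: 'k set)" by (simp add: card_mono)
  ultimately show ?thesis by (simp add: card_graph_pts card_undet_pts)
qed

end


theorem mainTheorem19:
  fixes p h :: nat
  assumes "prime p" and "h \<ge> 1"
    and "card (UNIV :: 'k::{field, finite} set) = p ^ h"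
  shows "dual_code p (code_PG p :: ('k vec3 set \<Rightarrow> int) set) \<noteq> {\<lambda>_. 0}
    \<and> real (min_dist (dual_code p (code_PG p :: ('k vec3 set \<Rightarrow> int) set)))
        \<le> 2 * real (p ^ h) + 1 - (real (p ^ h) - 1) / (real p - 1)"
proof -
  let ?c = "graph_word p :: 'k vec3 set \<Rightarrow> int" and ?D = "det_dirs p :: 'k set"
  note field = assms(1) assms(3)
  have dual: "?c \<in> dual_code p (code_PG p)" and nonzero: "?c \<noteq> (\<lambda>_. 0)"
    using graph_word_in_dual_code[OF field] graph_word_nonzero[OF field] .
  have p2: "p \<ge> 2" using p_ge_2[OF field] .
  have "card ?D * (p - 1) = p ^ h - 1"
    using card_det_dirs[OF field] assms(3) by simp
  hence "real (card ?D) * (real p - 1) = real (p ^ h) - 1"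
    using p2 by (metis of_nat_1 of_nat_diff of_nat_mult one_le_numeral one_le_power le_trans)
  hence "real (card ?D) = (real (p ^ h) - 1) / (real p - 1)"
    using p2 by (simp add: eq_divide_eq)
  moreover have "card ?D \<le> p ^ h" using assms(3) by (metis card_mono finite subset_UNIV)
  ultimately have "real (weight ?c) = 2 * real (p ^ h) + 1 - (real (p ^ h) - 1) / (real p - 1)"
    using weight_graph_word[OF field] assms(3) by (simp add: of_nat_diff)
  moreover have "min_dist (dual_code p (code_PG p :: ('k vec3 set \<Rightarrow> int) set)) \<le> weight ?c"
    using min_dist_le_weight[OF dual nonzero] .
  ultimately show ?thesis using dual nonzero by force
qed

end
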